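(* Let $\varepsilon\neq0$. For every solution $\mathbf x:\mathbb R\to\mathbb R^3$ of the $\varepsilon$-revised system $$\dot{\mathbf x}=\mathbf x\times\mathbf m(\mathbf x)+\varepsilon[(\mathbf x\times\mathbf m(\mathbf x))\times\mathbf m(\mathbf x)],$$ the distance to the equilibrium set tends to zero in both time directions: $$d(\mathbf x(t),\mathbf E)\to0\ \text{ as } t\to+\infty\qquad\text{and}\qquad d(\mathbf x(t),\mathbf E)\to0\ \text{ as } t\to-\infty .$$
   Context: Fix constants $0<a_1<a_2<a_3$ and $a,b,c\in\mathbb R$. Set $\mathbf m(\mathbf x)=(a_1x^1+a,\ a_2x^2+b,\ a_3x^3+c)$; $\times$ is the cross product. $\mathbf E=\{\mathbf x\in\mathbb R^3:\mathbf x\times\mathbf m(\mathbf x)=\mathbf 0\}$ is the equilibrium set, and $d(\cdot,\mathbf E)$ is the Euclidean distance to $\mathbf E$. *)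

theory Defs
  imports "HOL-Analysis.Analysis"
begin

definition mfield :: "real \<Rightarrow> real \<Rightarrow> real \<Rightarrow> real \<Rightarrow> real \<Rightarrow> real \<Rightarrow> real^3 \<Rightarrow> real^3" where
  "mfield a1 a2 a3 a b c x = vector [a1 * x$1 + a, a2 * x$2 + b, a3 * x$3 + c]"

definition equil_set :: "real \<Rightarrow> real \<Rightarrow> real \<Rightarrow> real \<Rightarrow> real \<Rightarrow> real \<Rightarrow> (real^3) set" where
  "equil_set a1 a2 a3 a b c = {x. cross3 x (mfield a1 a2 a3 a b c x) = 0}"

end

theory Submission
  imports Defs
begin

(* The revised field is orthogonal to m(x), which is the gradient of
   H(x) = (a1 x1^2 + a2 x2^2 + a3 x3^2)/2 + a x1 + b x2 + c x3, so H is a first integral. Since H is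
   coercive, every solution stays in a compact sublevel set of H and is uniformly continuous.
   Along solutions d/dt |x|^2 = -2 eps |x \<times> m(x)|^2, whose zero set is E, so |x|^2 is monotone and
   bounded. A solution returning infinitely often to distance delta from E would spend a time of
   fixed length near each return where |x \<times> m(x)| is bounded below, and |x|^2 would change without
   bound. Reversing time gives the limit at -infinity. *)

lemma positive_lower_bound_away_from_zeros:
  fixes g :: "'a::metric_space \<Rightarrow> real"
  assumes "compact K" "continuous_on K g" "\<And>u. u \<in> K \<Longrightarrow> g u \<ge> 0"
    and "\<And>u. u \<in> K \<Longrightarrow> g u = 0 \<Longrightarrow> u \<in> Z" "\<delta> > 0"
  obtains c where "c > 0" "\<And>u. u \<in> K \<Longrightarrow> \<delta> \<le> infdist u Z \<Longrightarrow> c \<le> g u"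
proof (cases "K \<inter> {u. \<delta> \<le> infdist u Z} = {}")
  case True
  then show ?thesis using that[of 1] by auto
next
  case False
  have "compact (K \<inter> {u. \<delta> \<le> infdist u Z})"
    by (intro compact_Int_closed assms(1) closed_Collect_le continuous_intros)
  from continuous_attains_inf[OF this False continuous_on_subset[OF assms(2)]]
  obtain u0 where u0: "u0 \<in> K" "\<delta> \<le> infdist u0 Z"
    and min: "\<And>u. u \<in> K \<Longrightarrow> \<delta> \<le> infdist u Z \<Longrightarrow> g u0 \<le> g u"
    by auto
  have "u0 \<notin> Z" using u0 \<open>\<delta> > 0\<close> by (auto simp: infdist_zero)
  then have "g u0 > 0" using assms(3,4) u0(1) by force
  then show ?thesis using that min by blast
qed

lemma tendsto_infdist_zeros_at_top:
  fixes y :: "real \<Rightarrow> 'a::metric_space"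
  assumes K: "compact K" "\<And>t. y t \<in> K" and y: "uniformly_continuous_on UNIV y"
    and g: "continuous_on K g" "\<And>u. u \<in> K \<Longrightarrow> g u \<ge> 0" "\<And>u. u \<in> K \<Longrightarrow> g u = 0 \<Longrightarrow> u \<in> Z"
    and V: "continuous_on K V" "\<And>t. ((\<lambda>t. V (y t)) has_real_derivative g (y t)) (at t)"
  shows "((\<lambda>t. infdist (y t) Z) \<longlongrightarrow> 0) at_top"
proof (rule ccontr)
  assume "\<not> ?thesis"
  then obtain \<delta> where "\<delta> > 0" and "\<not> (\<forall>\<^sub>F t in at_top. infdist (y t) Z < \<delta>)"
    by (auto simp: tendsto_iff dist_real_def infdist_nonneg)
  then have far: "\<exists>t\<ge>T. \<delta> \<le> infdist (y t) Z" for T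
    unfolding eventually_at_top_linorder by (meson not_le)
  have "\<delta>/2 > 0" using \<open>\<delta> > 0\<close> by simp
  obtain c where "c > 0" and c: "\<And>u. u \<in> K \<Longrightarrow> \<delta>/2 \<le> infdist u Z \<Longrightarrow> c \<le> g u"
    using positive_lower_bound_away_from_zeros[OF K(1) g \<open>\<delta>/2 > 0\<close>] by blast
  obtain \<eta> where "\<eta> > 0" and \<eta>: "\<And>s t. dist s t < \<eta> \<Longrightarrow> dist (y s) (y t) < \<delta>/2"
    using y \<open>\<delta>/2 > 0\<close> unfolding uniformly_continuous_on_def by (metis UNIV_I)
  define W where "W = (\<lambda>t. V (y t))"
  have W': "(W has_real_derivative g (y t)) (at t)" for t
    unfolding W_def by (rule V(2))
  have W_mono: "W s \<le> W t" if "s \<le> t" for s t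
    by (rule DERIV_nonneg_imp_nondecreasing[OF that]) (use W' g(2) K(2) in blast)
  have W_gain: "W t + \<eta> * c \<le> W (t + \<eta>)" if "\<delta> \<le> infdist (y t) Z" for t
  proof -
    have "\<exists>s. t < s \<and> s < t + \<eta> \<and> W (t + \<eta>) - W t = (t + \<eta> - t) * g (y s)"
      by (rule MVT2) (use W' \<open>\<eta> > 0\<close> in auto)
    then obtain s where s: "t < s" "s < t + \<eta>" and "W (t + \<eta>) - W t = \<eta> * g (y s)"
      by auto
    moreover have "\<delta>/2 \<le> infdist (y s) Z"
      using infdist_triangle[of "y t" Z "y s"] \<eta>[of t s] s that by (simp add: dist_real_def)
    then have "c \<le> g (y s)" using c K(2) by blast
    ultimately have "\<eta> * c \<le> W (t + \<eta>) - W t" using \<open>\<eta> > 0\<close> by (simp add: mult_left_mono)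
    then show ?thesis by linarith
  qed
  obtain B where B: "\<And>u. u \<in> K \<Longrightarrow> norm (V u) \<le> B"
    using compact_imp_bounded[OF compact_continuous_image[OF V(1) K(1)]]
    unfolding bounded_iff by blast
  have "W t \<le> B" for t using B[OF K(2)[of t]] by (simp add: W_def abs_le_iff)
  then have bdd: "bdd_above (range W)" by (meson bdd_aboveI2)
  have "Sup (range W) - \<eta> * c < Sup (range W)" using \<open>\<eta> > 0\<close> \<open>c > 0\<close> by simp
  then obtain T where T: "Sup (range W) - \<eta> * c < W T"
    using less_cSupD[of "range W"] by blast
  obtain t where "T \<le> t" "\<delta> \<le> infdist (y t) Z" using far by blast
  then have "W T + \<eta> * c \<le> W (t + \<eta>)" using W_mono[of T t] W_gain[of t] by linarith
  moreover have "W (t + \<eta>) \<le> Sup (range W)" using bdd by (simp add: cSup_upper)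
  ultimately show False using T by linarith
qed

lemma tendsto_infdist_zeros_at_top_at_bot:
  fixes y :: "real \<Rightarrow> 'a::metric_space"
  assumes K: "compact K" "\<And>t. y t \<in> K" and y: "uniformly_continuous_on UNIV y"
    and g: "continuous_on K g" "\<And>u. u \<in> K \<Longrightarrow> g u \<ge> 0" "\<And>u. u \<in> K \<Longrightarrow> g u = 0 \<Longrightarrow> u \<in> Z"
    and V: "continuous_on K V" "\<And>t. ((\<lambda>t. V (y t)) has_real_derivative \<sigma> * g (y t)) (at t)"
    and "\<sigma> \<noteq> 0"
  shows "((\<lambda>t. infdist (y t) Z) \<longlongrightarrow> 0) at_top \<and> ((\<lambda>t. infdist (y t) Z) \<longlongrightarrow> 0) at_bot"
proof
  have V_div: "continuous_on K (\<lambda>u. V u / \<sigma>)"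
    using continuous_on_divide[OF V(1) continuous_on_const] \<open>\<sigma> \<noteq> 0\<close> by simp
  have "((\<lambda>t. V (y t) / \<sigma>) has_real_derivative g (y t)) (at t)" for t
    using DERIV_cdivide[OF V(2)[of t], where c = \<sigma>] \<open>\<sigma> \<noteq> 0\<close> by simp
  from tendsto_infdist_zeros_at_top[OF K y g V_div this]
  show "((\<lambda>t. infdist (y t) Z) \<longlongrightarrow> 0) at_top" .
  have mirror_K: "y (- t) \<in> K" for t by (rule K(2))
  have mirror_y: "uniformly_continuous_on UNIV (\<lambda>t. y (- t))"
    by (rule uniformly_continuous_on_compose[OF uniformly_continuous_on_minus[OF uniformly_continuous_on_id]])
      (use y in simp)
  have mirror_V: "continuous_on K (\<lambda>u. - (V u / \<sigma>))"
    by (rule continuous_on_minus[OF V_div])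
  have "((\<lambda>t. - (V (y (- t)) / \<sigma>)) has_real_derivative g (y (- t))) (at t)" for t
    using DERIV_minus[OF DERIV_mirror[THEN iffD1, OF DERIV_cdivide[OF V(2)[of "- t"], where c = \<sigma>]]]
      \<open>\<sigma> \<noteq> 0\<close>
    by simp
  from tendsto_infdist_zeros_at_top[OF K(1) mirror_K mirror_y g mirror_V this]
  have "((\<lambda>t. infdist (y (- t)) Z) \<longlongrightarrow> 0) at_top" .
  then show "((\<lambda>t. infdist (y t) Z) \<longlongrightarrow> 0) at_bot"
    by (simp add: filterlim_at_bot_mirror)
qed

lemma uniformly_continuous_on_trajectory:
  fixes y :: "real \<Rightarrow> 'a::real_normed_vector"
  assumes "compact K" "\<And>t. y t \<in> K" "continuous_on K F"
    and "\<And>t. (y has_vector_derivative F (y t)) (at t)"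
  shows "uniformly_continuous_on UNIV y"
proof -
  obtain M where M: "\<And>u. u \<in> K \<Longrightarrow> norm (F u) \<le> M"
    using compact_imp_bounded[OF compact_continuous_image[OF assms(3,1)]]
    unfolding bounded_iff by blast
  have "norm (y s - y t) \<le> M * norm (s - t)" for s t
  proof (rule differentiable_bound[where S = UNIV and f' = "\<lambda>t h. h *\<^sub>R F (y t)"])
    show "(y has_derivative (\<lambda>h. h *\<^sub>R F (y t))) (at t within UNIV)" for t
      using assms(4)[of t] by (simp add: has_vector_derivative_def)
    show "onorm (\<lambda>h. h *\<^sub>R F (y t)) \<le> M" for t
      using M[OF assms(2)] by (simp add: onorm_scaleR_left[OF bounded_linear_ident] onorm_id)
  qed auto
  moreover have "0 \<le> M" using order.trans[OF norm_ge_zero M[OF assms(2)]] .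
  ultimately have "M-lipschitz_on UNIV y"
    by (intro lipschitz_onI) (simp_all add: dist_norm)
  then show ?thesis by (rule lipschitz_on_uniformly_continuous)
qed

lemma has_real_derivative_along_curve:
  fixes y :: "real \<Rightarrow> 'a::real_inner"
  assumes "(f has_derivative (\<lambda>h. G \<bullet> h)) (at (y t))" "(y has_vector_derivative v) (at t)"
  shows "((\<lambda>s. f (y s)) has_real_derivative G \<bullet> v) (at t)"
  using diff_chain_at[OF assms(2)[unfolded has_vector_derivative_def] assms(1)]
  by (simp add: has_field_derivative_def o_def mult_commute_abs)

lemma quadratic_le_imp_le:
  fixes k \<beta> C r :: real
  assumes "0 < k" "0 \<le> r" "k * r\<^sup>2 \<le> \<beta> * r + C"
  shows "r \<le> (\<bar>\<beta>\<bar> + \<bar>C\<bar>) / k + 1"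
proof (cases "r \<le> 1")
  case True
  then show ?thesis using assms(1) by (simp add: add_increasing)
next
  case False
  have "\<beta> * r \<le> \<bar>\<beta>\<bar> * r" using False by (intro mult_right_mono) auto
  moreover have "\<bar>C\<bar> * 1 \<le> \<bar>C\<bar> * r" using False by (intro mult_left_mono) auto
  ultimately have "(k * r) * r \<le> (\<bar>\<beta>\<bar> + \<bar>C\<bar>) * r"
    using assms(3) abs_ge_self[of C] by (simp add: power2_eq_square algebra_simps)
  then have "k * r \<le> \<bar>\<beta>\<bar> + \<bar>C\<bar>" using False by simp
  then show ?thesis using assms(1) by (simp add: field_simps)
qed

definition revised_field :: "real \<Rightarrow> (real^3 \<Rightarrow> real^3) \<Rightarrow> real^3 \<Rightarrow> real^3" where
  "revised_field \<epsilon> m u = cross3 u (m u) + \<epsilon> *\<^sub>R cross3 (cross3 u (m u)) (m u)"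

lemma inner_revised_field_right: "m u \<bullet> revised_field \<epsilon> m u = 0"
  by (simp add: revised_field_def inner_add_right inner_commute dot_cross_self)

lemma inner_revised_field_left: "u \<bullet> revised_field \<epsilon> m u = - \<epsilon> * (norm (cross3 u (m u)))\<^sup>2"
proof -
  have "u \<bullet> cross3 (cross3 u w) w = - (cross3 u w \<bullet> cross3 u w)" for w
    by (simp add: cross3_simps power2_eq_square)
  then show ?thesis
    by (simp add: revised_field_def inner_add_right dot_cross_self power2_norm_eq_inner)
qed

lemma continuous_on_revised_field:
  "continuous_on S m \<Longrightarrow> continuous_on S (revised_field \<epsilon> m)"
  unfolding revised_field_def by (intro continuous_intros continuous_on_cross)

lemma continuous_on_mfield: "continuous_on S (mfield a1 a2 a3 a b c)"
proof -
  have "mfield a1 a2 a3 a b c = (\<lambda>u. \<chi> i. (if i = 1 then a1 else if i = 2 then a2 else a3) * u$i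
      + (if i = 1 then a else if i = 2 then b else c))"
    by (auto simp: mfield_def vec_eq_iff forall_3)
  then show ?thesis by (simp add: continuous_intros)
qed

definition mfield_potential :: "real \<Rightarrow> real \<Rightarrow> real \<Rightarrow> real \<Rightarrow> real \<Rightarrow> real \<Rightarrow> real^3 \<Rightarrow> real" where
  "mfield_potential a1 a2 a3 a b c u =
     (a1 * (u$1)\<^sup>2 + a2 * (u$2)\<^sup>2 + a3 * (u$3)\<^sup>2) / 2 + a * u$1 + b * u$2 + c * u$3"

lemma has_derivative_mfield_potential:
  "(mfield_potential a1 a2 a3 a b c has_derivative (\<lambda>h. mfield a1 a2 a3 a b c u \<bullet> h)) (at u)"
proof -
  have nth: "((\<lambda>u. u $ i) has_derivative (\<lambda>h. h $ i)) (at u)" for i :: 3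
    by (rule bounded_linear_imp_has_derivative[OF bounded_linear_vec_nth])
  show ?thesis
    unfolding mfield_potential_def [abs_def]
    by (rule derivative_eq_intros nth refl | simp)+
      (rule ext, simp add: mfield_def inner_vec_def sum_3 field_simps)
qed

lemma mfield_potential_coercive:
  assumes "k \<le> a1" "k \<le> a2" "k \<le> a3"
  shows "k * (norm u)\<^sup>2
    \<le> 2 * norm (vector [a, b, c] :: real^3) * norm u + 2 * mfield_potential a1 a2 a3 a b c u"
proof -
  have "k * (norm u)\<^sup>2 \<le> a1 * (u$1)\<^sup>2 + a2 * (u$2)\<^sup>2 + a3 * (u$3)\<^sup>2"
    unfolding norm_vec_def L2_set_def sum_3 using assms
    by (simp add: algebra_simps add_mono mult_right_mono)
  moreover have "- (norm (vector [a, b, c] :: real^3) * norm u) \<le> a * u$1 + b * u$2 + c * u$3"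
    using Cauchy_Schwarz_ineq2[of "vector [a, b, c]" u] by (simp add: inner_vec_def sum_3)
  ultimately show ?thesis by (simp add: mfield_potential_def field_simps)
qed

lemma compact_mfield_potential_sublevel:
  assumes "0 < a1" "0 < a2" "0 < a3"
  shows "compact {u. mfield_potential a1 a2 a3 a b c u \<le> h}"
proof (unfold compact_eq_bounded_closed, intro conjI)
  show "closed {u. mfield_potential a1 a2 a3 a b c u \<le> h}"
    unfolding mfield_potential_def by (intro closed_Collect_le continuous_intros) auto
  define k where "k = min a1 (min a2 a3)"
  define \<beta> where "\<beta> = 2 * norm (vector [a, b, c] :: real^3)"
  have "k > 0" using assms by (simp add: k_def)
  have "norm u \<le> (\<bar>\<beta>\<bar> + \<bar>2 * h\<bar>) / k + 1" if "mfield_potential a1 a2 a3 a b c u \<le> h" for u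
  proof (rule quadratic_le_imp_le[OF \<open>k > 0\<close> norm_ge_zero])
    have "k * (norm u)\<^sup>2 \<le> \<beta> * norm u + 2 * mfield_potential a1 a2 a3 a b c u"
      unfolding \<beta>_def by (rule mfield_potential_coercive) (simp_all add: k_def)
    then show "k * (norm u)\<^sup>2 \<le> \<beta> * norm u + 2 * h" using that by linarith
  qed
  then show "bounded {u. mfield_potential a1 a2 a3 a b c u \<le> h}"
    unfolding bounded_iff by blast
qed

lemma mfield_potential_constant_along_revised_flow:
  assumes "\<And>t. (x has_vector_derivative revised_field \<epsilon> (mfield a1 a2 a3 a b c) (x t)) (at t)"
  shows "mfield_potential a1 a2 a3 a b c (x t) = mfield_potential a1 a2 a3 a b c (x s)"
proof -
  have "((\<lambda>t. mfield_potential a1 a2 a3 a b c (x t)) has_real_derivative 0) (at t)" for t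
    using has_real_derivative_along_curve[OF has_derivative_mfield_potential[of a1 a2 a3 a b c] assms]
    by (simp add: inner_revised_field_right)
  then show ?thesis
    using DERIV_isconst_all[of "\<lambda>t. mfield_potential a1 a2 a3 a b c (x t)"] by blast
qed

lemma has_real_derivative_inner_self_along_revised_flow:
  fixes x :: "real \<Rightarrow> real^3"
  assumes "\<And>t. (x has_vector_derivative revised_field \<epsilon> m (x t)) (at t)"
  shows "((\<lambda>t. x t \<bullet> x t) has_real_derivative (-2 * \<epsilon>) * (norm (cross3 (x t) (m (x t))))\<^sup>2) (at t)"
proof -
  have "((\<lambda>u. u \<bullet> u) has_derivative (\<lambda>h. (2 *\<^sub>R u) \<bullet> h)) (at u)" for u :: "real^3"
    by (rule derivative_eq_intros refl)+ (simp add: inner_commute)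
  from has_real_derivative_along_curve[OF this assms]
  show ?thesis by (simp add: inner_revised_field_left mult.assoc)
qed

theorem theorem5p3:
  fixes a1 a2 a3 a b c \<epsilon> :: real and x :: "real \<Rightarrow> real^3"
  assumes "0 < a1" "a1 < a2" "a2 < a3"
    and "\<epsilon> \<noteq> 0"
    and "\<And>t. (x has_vector_derivative
           (cross3 (x t) (mfield a1 a2 a3 a b c (x t))
            + \<epsilon> *\<^sub>R cross3 (cross3 (x t) (mfield a1 a2 a3 a b c (x t))) (mfield a1 a2 a3 a b c (x t)))) (at t)"
  shows "((\<lambda>t. infdist (x t) (equil_set a1 a2 a3 a b c)) \<longlongrightarrow> 0) at_top \<and>
         ((\<lambda>t. infdist (x t) (equil_set a1 a2 a3 a b c)) \<longlongrightarrow> 0) at_bot"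
proof -
  define m where "m = mfield a1 a2 a3 a b c"
  define K where "K = {u. mfield_potential a1 a2 a3 a b c u \<le> mfield_potential a1 a2 a3 a b c (x 0)}"
  define g where "g u = (norm (cross3 u (m u)))\<^sup>2" for u
  have x': "(x has_vector_derivative revised_field \<epsilon> m (x t)) (at t)" for t
    using assms(5) by (simp add: revised_field_def m_def)
  have xK: "x t \<in> K" for t
    using mfield_potential_constant_along_revised_flow[OF x'[unfolded m_def], of t 0]
    by (simp add: K_def)
  have K: "compact K"
    unfolding K_def using assms(1-3) by (intro compact_mfield_potential_sublevel) auto
  have x_unif: "uniformly_continuous_on UNIV x"
    by (rule uniformly_continuous_on_trajectory[OF K xK _ x'])
      (simp add: m_def continuous_on_revised_field continuous_on_mfield)
  have "continuous_on K g"
    unfolding g_def m_def by (intro continuous_intros continuous_on_cross continuous_on_mfield)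
  moreover have "u \<in> equil_set a1 a2 a3 a b c" if "g u = 0" for u
    using that by (simp add: g_def equil_set_def m_def)
  moreover have "continuous_on K (\<lambda>u. u \<bullet> u)" by (intro continuous_intros)
  ultimately show ?thesis
    using tendsto_infdist_zeros_at_top_at_bot[OF K xK x_unif, of g _ "\<lambda>u. u \<bullet> u" "-2 * \<epsilon>"]
      has_real_derivative_inner_self_along_revised_flow[OF x'] assms(4)
    by (simp add: g_def)
qed

end
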